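(* Let $p$ be an odd prime, $q=p^m$, $q=et+1$ with integers $e\geq 2,t\geq 1$, $R_{e,q}=\mathbb{F}_q[u]/\langle u^e-1\rangle$ with orthogonal idempotents $\mu_1,\dots,\mu_e$ (see context), and assume $\gcd(n,q)\neq 1$. Let $\mathcal{C}=\langle\sum_{i=1}^e\mu_ig_i(x)\rangle$ be a cyclic code of length $n$ over $R_{e,q}$, where $g_i(x)\in\mathbb{F}_q[x]$ is monic and $g_i(x)\mid x^n-1$ for $1\leq i\leq e$. Then $\mathcal{C}$ is an LCD code if and only if, for every $1\leq i\leq e$, $g_i(x)$ is self-reciprocal and each monic irreducible factor of $g_i(x)$ has the same multiplicity in $g_i(x)$ as in $x^n-1$.
   Context: Write $u^e-1=\prod_{i=1}^e(u-\alpha_i)$ over $\mathbb{F}_q$, $G_i=u-\alpha_i$, $\widehat{G}_i=(u^e-1)/G_i$, $z_iG_i+h_i\widehat{G}_i=1$, $\mu_i=h_i\widehat{G}_i$; these are pairwise orthogonal idempotents summing to $1$. Cyclic codes are identified with ideals of $R_{e,q}[x]/\langle x^n-1\rangle$. A code is LCD if $\mathcal{C}\cap\mathcal{C}^\perp=\{0\}$ (Euclidean dual). A polynomial $g$ is self-reciprocal if its reciprocal $x^{\deg g}g(1/x)$ equals $g$ up to a nonzero scalar. *)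

theory Defs
  imports "HOL-Computational_Algebra.Computational_Algebra"
begin

(* The polynomial X^k - 1 (used both as u^e - 1 over F_q and as x^n - 1). *)
definition xpm1 :: "nat \<Rightarrow> 'a::field poly" where
  "xpm1 k = monom 1 k - 1"

(* Elements of R_{e,q} = F_q[u]/<u^e-1> are represented by their canonical
   representatives: polynomials in u reduced modulo u^e - 1. *)
definition in_R :: "nat \<Rightarrow> 'a::field poly \<Rightarrow> bool" where
  "in_R e r \<longleftrightarrow> r mod xpm1 e = r"

definition mu :: "nat \<Rightarrow> (nat \<Rightarrow> 'a::field) \<Rightarrow> (nat \<Rightarrow> 'a poly) \<Rightarrow> nat \<Rightarrow> 'a poly" where
  "mu e \<alpha> h i = (h i * (xpm1 e div [:- \<alpha> i, 1:])) mod xpm1 e"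

definition words :: "nat \<Rightarrow> nat \<Rightarrow> (nat \<Rightarrow> 'a::field poly) set" where
  "words e n = {v. \<forall>j. (j < n \<longrightarrow> in_R e (v j)) \<and> (n \<le> j \<longrightarrow> v j = 0)}"

(* Image of a polynomial in x with coefficients in F_q[u] in R[x]/<x^n-1>,
   as its coefficient vector (reduction mod x^n-1 and mod u^e-1). *)
definition to_word :: "nat \<Rightarrow> nat \<Rightarrow> 'a::field poly poly \<Rightarrow> nat \<Rightarrow> 'a poly" where
  "to_word e n P = (\<lambda>k. if k < n then
      (\<Sum>j\<le>degree P. if j mod n = k then coeff P j else 0) mod xpm1 e else 0)"

definition cyc_mult :: "nat \<Rightarrow> nat \<Rightarrow> (nat \<Rightarrow> 'a::field poly) \<Rightarrow> (nat \<Rightarrow> 'a poly) \<Rightarrow> nat \<Rightarrow> 'a poly" where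
  "cyc_mult e n a b = (\<lambda>k. if k < n then
      (\<Sum>i<n. \<Sum>j<n. if (i + j) mod n = k then a i * b j else 0) mod xpm1 e else 0)"

definition cyclic_code_gen :: "nat \<Rightarrow> nat \<Rightarrow> (nat \<Rightarrow> 'a::field poly) \<Rightarrow> (nat \<Rightarrow> 'a poly) set" where
  "cyclic_code_gen e n g = {cyc_mult e n a g | a. a \<in> words e n}"

definition eucl_inner :: "nat \<Rightarrow> nat \<Rightarrow> (nat \<Rightarrow> 'a::field poly) \<Rightarrow> (nat \<Rightarrow> 'a poly) \<Rightarrow> 'a poly" where
  "eucl_inner e n c v = (\<Sum>j<n. c j * v j) mod xpm1 e"

definition eucl_dual :: "nat \<Rightarrow> nat \<Rightarrow> (nat \<Rightarrow> 'a::field poly) set \<Rightarrow> (nat \<Rightarrow> 'a poly) set" where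
  "eucl_dual e n C = {v \<in> words e n. \<forall>c\<in>C. eucl_inner e n c v = 0}"

definition is_LCD :: "nat \<Rightarrow> nat \<Rightarrow> (nat \<Rightarrow> 'a::field poly) set \<Rightarrow> bool" where
  "is_LCD e n C \<longleftrightarrow> C \<inter> eucl_dual e n C = {(\<lambda>_. 0)}"

definition self_reciprocal :: "'a::field poly \<Rightarrow> bool" where
  "self_reciprocal g \<longleftrightarrow> (\<exists>c. c \<noteq> 0 \<and> reflect_poly g = smult c g)"

end

theory Submission
  imports Defs
begin

text \<open>
  Evaluation at the distinct roots \<open>\<alpha>\<^sub>1, ..., \<alpha>\<^sub>e\<close> of \<open>u\<^sup>e - 1\<close> is a ring isomorphism
  \<open>R\<^sub>e\<^sub>,\<^sub>q \<cong> \<bbbF>\<^sub>q\<^sup>e\<close> sending \<open>\<mu>\<^sub>i\<close> to the \<open>i\<close>-th unit vector, and it is compatible with the cyclic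
  product and the Euclidean inner product of words. So the code generated by \<open>\<Sum> \<mu>\<^sub>i g\<^sub>i\<close> is LCD iff
  each cyclic code \<open>\<langle>g\<^sub>i\<rangle>\<close> over \<open>\<bbbF>\<^sub>q\<close> is.

  Over \<open>\<bbbF>\<^sub>q\<close> write \<open>x\<^sup>n - 1 = g h\<close>. The inner product of two words \<open>a, b\<close> is the constant
  coefficient of \<open>a(x) b(x\<^sup>-\<^sup>1)\<close> modulo \<open>x\<^sup>n - 1\<close>, so \<open>A g\<close> is orthogonal to \<open>\<langle>g\<rangle>\<close> iff
  \<open>x\<^sup>n - 1\<close> divides \<open>g(x) A(x\<^sup>-\<^sup>1) g(x\<^sup>-\<^sup>1)\<close>, i.e. iff \<open>h\<close> divides \<open>g\<^sup>* A\<close> with \<open>g\<^sup>*\<close> the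
  reciprocal of \<open>g\<close>. Hence \<open>\<langle>g\<rangle>\<close> is LCD iff \<open>h\<close> is coprime to \<open>g\<^sup>*\<close>. Since \<open>g\<^sup>*\<close> divides
  \<open>g h\<close> and has the degree of \<open>g\<close>, this holds iff \<open>g\<^sup>*\<close> is an associate of \<open>g\<close> and \<open>g\<close> is coprime
  to \<open>h\<close>, and the latter says that every irreducible factor of \<open>g\<close> has the same multiplicity in
  \<open>g\<close> as in \<open>x\<^sup>n - 1\<close>.
\<close>

section \<open>Polynomials modulo \<open>x\<^sup>n - 1\<close>\<close>

lemma degree_xpm1: "n \<ge> 1 \<Longrightarrow> degree (xpm1 n :: 'a::field poly) = n"
  unfolding xpm1_def by (subst diff_conv_add_uminus, subst degree_add_eq_left) (auto simp: degree_monom_eq)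

lemma xpm1_neq_0: "n \<ge> 1 \<Longrightarrow> xpm1 n \<noteq> (0 :: 'a::field poly)"
  using degree_xpm1[of n] by (metis degree_0 not_one_le_zero)

lemma xpm1_dvd_xpm1_mult: "xpm1 n dvd (xpm1 (n * k) :: 'a::field poly)"
proof (induction k)
  case (Suc k)
  have "xpm1 (n * Suc k) = monom 1 n * xpm1 (n * k) + (xpm1 n :: 'a poly)"
    by (simp add: xpm1_def algebra_simps mult_monom)
  with Suc show ?case by simp
qed (simp add: xpm1_def)

lemma xpm1_dvd_monom_diff_mod: "xpm1 n dvd monom (c::'a::field) m - monom c (m mod n)"
proof -
  have "monom c m = monom c (m mod n) * monom 1 (n * (m div n))"
    by (simp add: mult_monom)
  then have "monom c m - monom c (m mod n) = monom c (m mod n) * xpm1 (n * (m div n))"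
    by (simp add: xpm1_def algebra_simps)
  then show ?thesis
    using xpm1_dvd_xpm1_mult by (metis dvd_mult)
qed

lemma xpm1_dvd_monom_diff:
  assumes "a mod n = b mod n"
  shows "xpm1 n dvd monom (c::'a::field) a - monom c b"
proof -
  have "monom c a - monom c b = (monom c a - monom c (a mod n)) - (monom c b - monom c (b mod n))"
    using assms by simp
  then show ?thesis
    using xpm1_dvd_monom_diff_mod[of n c a] xpm1_dvd_monom_diff_mod[of n c b] by (metis dvd_diff)
qed

lemma sum_monom_mod_xpm1:
  assumes "n \<ge> 1"
  shows "(\<Sum>s\<in>S. monom (c s) (m s)) mod xpm1 n = (\<Sum>s\<in>S. monom (c s :: 'a::field) (m s mod n))"
proof -
  have "degree (\<Sum>s\<in>S. monom (c s) (m s mod n)) < degree (xpm1 n :: 'a poly)"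
    using assms by (simp add: degree_xpm1, intro degree_sum_less)
      (auto intro: le_less_trans[OF degree_monom_le])
  moreover have "xpm1 n dvd (\<Sum>s\<in>S. monom (c s) (m s)) - (\<Sum>s\<in>S. monom (c s) (m s mod n))"
    unfolding sum_subtractf[symmetric] by (intro dvd_sum xpm1_dvd_monom_diff_mod)
  ultimately show ?thesis
    by (metis mod_eq_dvd_iff mod_poly_less)
qed

lemma double_sum_monom_mod_xpm1:
  assumes "n \<ge> 1"
  shows "(\<Sum>s\<in>S. \<Sum>r\<in>T. monom (c s r) (m s r)) mod xpm1 n
       = (\<Sum>s\<in>S. \<Sum>r\<in>T. monom (c s r :: 'a::field) (m s r mod n))"
  using sum_monom_mod_xpm1[OF assms, of "case_prod c" "case_prod m" "S \<times> T"]
  by (simp add: sum.cartesian_product split_def)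

lemma coeff_mod_xpm1_eq_0:
  assumes "n \<ge> 1" "k \<ge> n"
  shows "coeff (Y mod xpm1 n :: 'a::field poly) k = 0"
proof (cases "Y mod xpm1 n = 0")
  case False
  then have "degree (Y mod xpm1 n) < n"
    using degree_mod_less'[OF xpm1_neq_0[OF assms(1)] False] degree_xpm1[OF assms(1), where 'a='a] by simp
  then show ?thesis using assms by (intro coeff_eq_0) auto
qed simp

definition poly_of_word :: "nat \<Rightarrow> (nat \<Rightarrow> 'a::field) \<Rightarrow> 'a poly" where
  "poly_of_word n w = (\<Sum>k<n. monom (w k) k)"

definition word_of_poly :: "nat \<Rightarrow> 'a::field poly \<Rightarrow> nat \<Rightarrow> 'a" where
  "word_of_poly n Y = (\<lambda>k. coeff (Y mod xpm1 n) k)"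

definition cyc_conv :: "nat \<Rightarrow> (nat \<Rightarrow> 'a::field) \<Rightarrow> (nat \<Rightarrow> 'a) \<Rightarrow> nat \<Rightarrow> 'a" where
  "cyc_conv n a b = (\<lambda>k. if k < n then (\<Sum>i<n. \<Sum>j<n. if (i + j) mod n = k then a i * b j else 0) else 0)"

lemma cyc_conv_eq_word_of_poly_mult:
  assumes "n \<ge> 1"
  shows "cyc_conv n a b = word_of_poly n (poly_of_word n a * poly_of_word n b)"
proof
  fix k
  have "poly_of_word n a * poly_of_word n b = (\<Sum>i<n. \<Sum>j<n. monom (a i * b j) (i + j))"
    by (simp add: poly_of_word_def sum_product mult_monom)
  then have "poly_of_word n a * poly_of_word n b mod xpm1 n
      = (\<Sum>i<n. \<Sum>j<n. monom (a i * b j) ((i + j) mod n))"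
    using double_sum_monom_mod_xpm1[OF assms] by simp
  then show "cyc_conv n a b k = word_of_poly n (poly_of_word n a * poly_of_word n b) k"
    using coeff_mod_xpm1_eq_0[OF assms, of k "poly_of_word n a * poly_of_word n b"]
    by (auto simp: cyc_conv_def word_of_poly_def coeff_sum)
qed

lemma poly_of_word_of_poly:
  assumes "n \<ge> 1"
  shows "poly_of_word n (word_of_poly n Y) = Y mod xpm1 n"
proof -
  have "degree (Y mod xpm1 n) \<le> n - 1"
    using degree_mod_less[OF xpm1_neq_0[OF assms], of Y] degree_xpm1[OF assms, where 'a='a] by auto
  then have "(\<Sum>i\<le>n-1. monom (coeff (Y mod xpm1 n) i) i) = Y mod xpm1 n"
    by (rule poly_as_sum_of_monoms')
  moreover have "{..n-1} = {..<n}" using assms by auto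
  ultimately show ?thesis by (simp add: poly_of_word_def word_of_poly_def)
qed

lemma word_of_poly_eq_0_iff: "word_of_poly n Y = (\<lambda>_. 0) \<longleftrightarrow> xpm1 n dvd Y"
  by (auto simp: word_of_poly_def poly_eq_iff fun_eq_iff simp flip: mod_eq_0_iff_dvd)

text \<open>Modulo \<open>x\<^sup>n - 1\<close> the monomial \<open>x\<^sup>n\<^sup>-\<^sup>1\<close> is the inverse of \<open>x\<close>, so \<open>inv_var n V\<close>
  represents \<open>V(x\<^sup>-\<^sup>1)\<close>.\<close>

definition inv_var :: "nat \<Rightarrow> 'a::field poly \<Rightarrow> 'a poly" where
  "inv_var n V = V \<circ>\<^sub>p monom 1 (n - 1)"

lemma pcompose_monom: "monom c l \<circ>\<^sub>p q = smult c (q ^ l)"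
  by (induction l) (simp_all add: monom_0 monom_Suc pcompose_pCons)

lemma inv_var_monom: "inv_var n (monom c l) = monom c ((n - 1) * l)"
  by (simp add: inv_var_def pcompose_monom monom_power smult_monom mult.commute)

lemma inv_var_mult: "inv_var n (A * B) = inv_var n A * inv_var n B"
  by (simp add: inv_var_def pcompose_mult)

lemma inv_var_diff: "inv_var n (A - B) = inv_var n A - inv_var n B"
  by (simp add: inv_var_def pcompose_diff)

lemma xpm1_dvd_inv_var:
  assumes "xpm1 n dvd V"
  shows "xpm1 n dvd inv_var n (V :: 'a::field poly)"
proof -
  have "inv_var n (xpm1 n :: 'a poly) = xpm1 (n * (n - 1))"
    by (simp add: inv_var_def xpm1_def pcompose_diff pcompose_monom monom_power mult.commute pcompose_1)
  then have "xpm1 n dvd inv_var n (xpm1 n :: 'a poly)"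
    using xpm1_dvd_xpm1_mult by metis
  moreover obtain K where "V = xpm1 n * K"
    using assms by (auto elim: dvdE)
  ultimately show ?thesis
    by (simp add: inv_var_mult)
qed

lemma inv_var_mod_xpm1_eq:
  assumes "U mod xpm1 n = V mod xpm1 n"
  shows "inv_var n U mod xpm1 n = inv_var n (V :: 'a::field poly) mod xpm1 n"
  using assms xpm1_dvd_inv_var[of n "U - V"] by (simp add: inv_var_diff mod_eq_dvd_iff)

lemma dvd_pcompose_diff:
  "N dvd q1 - q2 \<Longrightarrow> N dvd V \<circ>\<^sub>p q1 - V \<circ>\<^sub>p (q2 :: 'a::comm_ring_1 poly)"
proof (induction V rule: pCons_induct)
  case (pCons a p)
  have "pCons a p \<circ>\<^sub>p q1 - pCons a p \<circ>\<^sub>p q2 = (q1 - q2) * (p \<circ>\<^sub>p q1) + q2 * (p \<circ>\<^sub>p q1 - p \<circ>\<^sub>p q2)"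
    by (simp add: pcompose_pCons algebra_simps)
  with pCons show ?case by simp
qed simp

lemma pred_mult_pred_mod: "n \<ge> 1 \<Longrightarrow> ((n - 1) * (n - 1)) mod n = 1 mod (n::nat)"
proof (cases "n = 1")
  case False
  assume "n \<ge> 1"
  with False have "(n - 1) * (n - 1) = 1 + n * (n - 2)"
    by (cases n) (auto simp: algebra_simps)
  then show ?thesis
    by (simp only: mod_mult_self2)
qed simp

lemma xpm1_dvd_inv_var_inv_var:
  assumes "n \<ge> 1"
  shows "xpm1 n dvd inv_var n (inv_var n V) - (V :: 'a::field poly)"
proof -
  have "xpm1 n dvd monom (1::'a) ((n - 1) * (n - 1)) - monom 1 1"
    using pred_mult_pred_mod[OF assms] by (intro xpm1_dvd_monom_diff) simp
  then have "xpm1 n dvd V \<circ>\<^sub>p monom 1 ((n - 1) * (n - 1)) - V \<circ>\<^sub>p monom 1 1"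
    by (rule dvd_pcompose_diff)
  moreover have "inv_var n (inv_var n V) = V \<circ>\<^sub>p monom 1 ((n - 1) * (n - 1))"
    by (simp add: inv_var_def pcompose_monom monom_power flip: pcompose_assoc)
  moreover have "V \<circ>\<^sub>p monom 1 1 = V"
    by (simp add: monom_Suc monom_0)
  ultimately show ?thesis
    by simp
qed

lemma xpm1_dvd_inv_var_iff:
  assumes "n \<ge> 1"
  shows "xpm1 n dvd inv_var n V \<longleftrightarrow> xpm1 n dvd (V :: 'a::field poly)"
proof
  assume "xpm1 n dvd inv_var n V"
  then have "xpm1 n dvd inv_var n (inv_var n V)" by (rule xpm1_dvd_inv_var)
  moreover have "V = inv_var n (inv_var n V) - (inv_var n (inv_var n V) - V)"
    by simp
  ultimately show "xpm1 n dvd V"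
    using xpm1_dvd_inv_var_inv_var[OF assms, of V] by (metis dvd_diff)
qed (rule xpm1_dvd_inv_var)

lemma add_pred_mult_mod_eq_0_iff:
  assumes "k < n" "l < (n::nat)"
  shows "(k + (n - 1) * l) mod n = 0 \<longleftrightarrow> k = l"
proof -
  have "k + (n - 1) * l + l = k + n * l"
    using assms by (cases n) (auto simp: algebra_simps)
  then have "int (k + (n - 1) * l) + int l = int k + int n * int l"
    by (metis of_nat_add of_nat_mult)
  then have "int (k + (n - 1) * l) = (int k - int l) + int n * int l"
    by simp
  then have "(k + (n - 1) * l) mod n = 0 \<longleftrightarrow> int n dvd int k - int l"
    by (metis mod_eq_0_iff_dvd of_nat_dvd_iff zdvd_reduce)
  also have "\<dots> \<longleftrightarrow> k = l"
  proof
    assume "int n dvd int k - int l"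
    then have "k \<noteq> l \<Longrightarrow> int n \<le> \<bar>int k - int l\<bar>"
      using dvd_imp_le_int[of "int k - int l" "int n"] by simp
    with assms show "k = l"
      by linarith
  qed simp
  finally show ?thesis .
qed

lemma diff_add_mod_eq_0_iff:
  assumes "k < n" "l < (n::nat)"
  shows "(n - k + l) mod n = 0 \<longleftrightarrow> l = k"
  using assms by (metis add.assoc add.commute add_diff_inverse_nat mod_add_right_eq
    mod_add_self2 mod_less mod_self order.asym)

lemma inner_word_of_poly:
  fixes U V :: "'a::field poly"
  assumes "n \<ge> 1"
  shows "(\<Sum>k<n. word_of_poly n U k * word_of_poly n V k) = coeff ((U * inv_var n V) mod xpm1 n) 0"
proof -
  define u where "u = word_of_poly n U"
  define v where "v = word_of_poly n V"
  have U: "U mod xpm1 n = (\<Sum>k<n. monom (u k) k)"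
    using poly_of_word_of_poly[OF assms, of U] by (simp add: u_def poly_of_word_def)
  have "inv_var n (V mod xpm1 n) = inv_var n (\<Sum>l<n. monom (v l) l)"
    using poly_of_word_of_poly[OF assms, of V] by (simp add: v_def poly_of_word_def)
  also have "\<dots> = (\<Sum>l<n. inv_var n (monom (v l) l))"
    by (simp add: inv_var_def pcompose_sum)
  also have "\<dots> = (\<Sum>l<n. monom (v l) ((n - 1) * l))"
    by (simp add: inv_var_monom)
  finally have V: "inv_var n (V mod xpm1 n) = (\<Sum>l<n. monom (v l) ((n - 1) * l))" .
  have "inv_var n V mod xpm1 n = inv_var n (V mod xpm1 n) mod xpm1 n"
    by (rule inv_var_mod_xpm1_eq) simp
  then have "(U * inv_var n V) mod xpm1 n = (U * inv_var n (V mod xpm1 n)) mod xpm1 n"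
    by (metis mod_mult_right_eq)
  also have "\<dots> = ((U mod xpm1 n) * inv_var n (V mod xpm1 n)) mod xpm1 n"
    by (simp add: mod_mult_left_eq)
  also have "\<dots> = (\<Sum>k<n. \<Sum>l<n. monom (u k * v l) ((k + (n - 1) * l) mod n))"
    by (simp add: U V sum_product mult_monom double_sum_monom_mod_xpm1[OF assms])
  finally have "coeff ((U * inv_var n V) mod xpm1 n) 0
      = (\<Sum>k<n. \<Sum>l<n. if (k + (n - 1) * l) mod n = 0 then u k * v l else 0)"
    by (simp add: coeff_sum)
  also have "\<dots> = (\<Sum>k<n. \<Sum>l<n. if l = k then u k * v l else 0)"
    by (intro sum.cong refl) (use add_pred_mult_mod_eq_0_iff in auto)
  finally show ?thesis
    by (simp add: u_def v_def)
qed

text \<open>The constant coefficient of \<open>x\<^sup>s Y\<close> modulo \<open>x\<^sup>n - 1\<close> is the coefficient of \<open>x\<^sup>n\<^sup>-\<^sup>s\<close> in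
  \<open>Y mod (x\<^sup>n - 1)\<close> for \<open>0 < s \<le> n\<close>.\<close>

lemma xpm1_dvd_if_coeff_0_shifts:
  assumes "n \<ge> 1" and shifts: "\<And>s. coeff ((monom 1 s * Y) mod xpm1 n) 0 = (0::'a::field)"
  shows "xpm1 n dvd Y"
proof -
  define y where "y = word_of_poly n Y"
  have Y: "Y mod xpm1 n = (\<Sum>l<n. monom (y l) l)"
    using poly_of_word_of_poly[OF assms(1), of Y] by (simp add: y_def poly_of_word_def)
  have "y k = 0" if "k < n" for k
  proof -
    have "(monom 1 (n - k) * Y) mod xpm1 n = (monom 1 (n - k) * (Y mod xpm1 n)) mod xpm1 n"
      by (simp add: mod_mult_right_eq)
    also have "\<dots> = (\<Sum>l<n. monom (y l) ((n - k + l) mod n))"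
      by (simp add: Y sum_distrib_left mult_monom sum_monom_mod_xpm1[OF assms(1)])
    finally have "0 = (\<Sum>l<n. if (n - k + l) mod n = 0 then y l else 0)"
      using shifts[of "n - k"] by (simp add: coeff_sum)
    also have "\<dots> = (\<Sum>l<n. if l = k then y l else 0)"
      by (intro sum.cong refl) (use that diff_add_mod_eq_0_iff in auto)
    finally show ?thesis
      using that by simp
  qed
  moreover have "y k = 0" if "k \<ge> n" for k
    using that coeff_mod_xpm1_eq_0[OF assms(1)] by (simp add: y_def word_of_poly_def)
  ultimately have "word_of_poly n Y = (\<lambda>_. 0)"
    by (metis y_def not_less)
  then show ?thesis
    by (simp add: word_of_poly_eq_0_iff)
qed

section \<open>LCD cyclic codes over a field\<close>

lemma reflect_poly_as_sum:
  "reflect_poly g = (\<Sum>j\<le>degree g. monom (coeff g j) (degree g - j))"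
proof (rule poly_eqI)
  fix k
  show "coeff (reflect_poly g) k = coeff (\<Sum>j\<le>degree g. monom (coeff g j) (degree g - j)) k"
  proof (cases "k \<le> degree g")
    case True
    have "(\<Sum>j\<le>degree g. if degree g - j = k then coeff g j else 0)
        = (\<Sum>j\<le>degree g. if j = degree g - k then coeff g j else 0)"
      by (intro sum.cong refl) (use True in auto)
    with True show ?thesis
      by (simp add: coeff_reflect_poly coeff_sum)
  next
    case False
    then show ?thesis
      by (auto simp: coeff_reflect_poly coeff_sum intro!: sum.neutral)
  qed
qed

lemma xpm1_dvd_monom_mult_inv_var_diff_reflect_poly:
  assumes "n \<ge> 1"
  shows "xpm1 n dvd monom 1 (degree g) * inv_var n g - reflect_poly (g :: 'a::field poly)"
proof -
  define d where "d = degree g"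
  have "inv_var n g = (\<Sum>j\<le>d. inv_var n (monom (coeff g j) j))"
    unfolding inv_var_def d_def
    by (subst poly_as_sum_of_monoms[symmetric, of g], subst pcompose_sum) simp
  then have "monom 1 d * inv_var n g - reflect_poly g
      = (\<Sum>j\<le>d. monom (coeff g j) (d + (n - 1) * j) - monom (coeff g j) (d - j))"
    by (simp add: inv_var_monom sum_distrib_left mult_monom reflect_poly_as_sum d_def
        sum_subtractf)
  also have "xpm1 n dvd \<dots>"
  proof (intro dvd_sum xpm1_dvd_monom_diff)
    fix j assume "j \<in> {..d}"
    with assms have "d + (n - 1) * j = (d - j) + j * n"
      by (cases n) (auto simp: algebra_simps)
    then show "(d + (n - 1) * j) mod n = (d - j) mod n"
      by simp
  qed
  finally show ?thesis
    by (simp add: d_def)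
qed

text \<open>\<open>x\<close> is a unit modulo \<open>x\<^sup>n - 1\<close>.\<close>

lemma xpm1_dvd_monom_mult_iff:
  assumes "n \<ge> 1"
  shows "xpm1 n dvd monom 1 k * V \<longleftrightarrow> xpm1 n dvd (V :: 'a::field poly)"
proof
  assume "xpm1 n dvd monom 1 k * V"
  then have "xpm1 n dvd monom 1 (k * (n - 1)) * (monom 1 k * V)"
    by (rule dvd_mult)
  moreover have "monom 1 (k * (n - 1)) * (monom 1 k * V) = monom 1 (n * k) * V"
    using assms by (simp add: mult_monom algebra_simps flip: mult.assoc)
  moreover have "xpm1 n dvd xpm1 (n * k) * V"
    using xpm1_dvd_xpm1_mult by (rule dvd_mult2)
  moreover have "V = monom 1 (n * k) * V - xpm1 (n * k) * V"
    by (simp add: xpm1_def algebra_simps)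
  ultimately show "xpm1 n dvd V"
    by (metis dvd_diff)
qed simp

lemma reflect_poly_xpm1:
  assumes "n \<ge> 1"
  shows "reflect_poly (xpm1 n :: 'a::field poly) = - xpm1 n"
proof (rule poly_eqI)
  fix k
  have "coeff (reflect_poly (xpm1 n :: 'a poly)) k = (if n < k then 0 else coeff (xpm1 n) (n - k))"
    by (simp add: coeff_reflect_poly degree_xpm1[OF assms])
  then show "coeff (reflect_poly (xpm1 n :: 'a poly)) k = coeff (- xpm1 n) k"
    using assms by (cases "k = 0"; cases "k = n"; cases "k < n")
      (auto simp: xpm1_def coeff_1 coeff_monom)
qed

lemma dvd_cancel_iff_coprime:
  fixes h k :: "'a::{idom,semiring_gcd}"
  assumes "h \<noteq> 0"
  shows "(\<forall>A. h dvd k * A \<longrightarrow> h dvd A) \<longleftrightarrow> coprime h k"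
proof
  assume cancel: "\<forall>A. h dvd k * A \<longrightarrow> h dvd A"
  define c where "c = gcd h k"
  have c0: "c \<noteq> 0"
    using assms by (simp add: c_def)
  have "k * (h div c) = (k div c) * h"
    by (metis c_def dvd_div_mult gcd_dvd1 gcd_dvd2 mult.commute dvd_div_mult2_eq)
  then have "h dvd h div c"
    using cancel by (metis dvd_triv_right)
  then have "h * c dvd h * 1"
    using c0 by (metis c_def dvd_mult_div_cancel gcd_dvd1 mult.commute mult_1_right mult_dvd_mono dvd_refl)
  then have "is_unit c"
    using assms by simp
  then show "coprime h k"
    using is_unit_gcd c_def by metis
qed (simp add: coprime_dvd_mult_right_iff)

lemma unit_factor_poly_field: "unit_factor (f :: 'a::field_gcd poly) = [:lead_coeff f:]"
proof -
  have "unit_factor c = c" for c :: 'a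
  proof (cases "c = 0")
    case False
    then have "normalize c = 1"
      by (intro is_unit_normalize) (simp add: dvd_field_iff)
    then show ?thesis
      using normalize_mult_unit_factor[of c] by simp
  qed simp
  then show ?thesis
    by (simp add: unit_factor_poly_def)
qed

lemma prime_poly_iff_monic_irreducible:
  "prime (f :: 'a::field_gcd poly) \<longleftrightarrow> irreducible f \<and> lead_coeff f = 1"
proof (cases "f = 0")
  case False
  then have "normalize f = f \<longleftrightarrow> unit_factor f = 1"
    using normalize_mult_unit_factor[of f] by (metis mult.right_neutral mult_cancel_left)
  then show ?thesis
    by (simp add: prime_def prime_elem_iff_irreducible unit_factor_poly_field one_pCons)
qed simp

lemma coprime_iff_no_common_prime:
  fixes g h :: "'a::factorial_semiring_gcd"
  assumes "g \<noteq> 0"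
  shows "coprime g h \<longleftrightarrow> (\<forall>f. prime f \<and> f dvd g \<longrightarrow> \<not> f dvd h)"
proof
  assume "coprime g h"
  then show "\<forall>f. prime f \<and> f dvd g \<longrightarrow> \<not> f dvd h"
    using coprime_common_divisor not_prime_unit by blast
next
  assume no_common: "\<forall>f. prime f \<and> f dvd g \<longrightarrow> \<not> f dvd h"
  show "coprime g h"
  proof (rule ccontr)
    assume "\<not> coprime g h"
    then obtain c where c: "c dvd g" "c dvd h" "\<not> is_unit c"
      by (rule not_coprimeE)
    moreover have "c \<noteq> 0"
      using c assms by auto
    ultimately obtain f where "prime f" "f dvd c"
      by (metis prime_divisorE)
    with c no_common show False
      by (meson dvd_trans)
  qed
qed

lemma coprime_iff_multiplicity_eq:
  fixes g h :: "'a::factorial_semiring_gcd"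
  assumes "g \<noteq> 0" "h \<noteq> 0"
  shows "coprime g h \<longleftrightarrow> (\<forall>f. prime f \<and> f dvd g \<longrightarrow> multiplicity f g = multiplicity f (g * h))"
proof -
  have "multiplicity f (g * h) = multiplicity f g + multiplicity f h" if "prime f" for f
    using that assms by (simp add: prime_elem_multiplicity_mult_distrib)
  moreover have "multiplicity f h = 0 \<longleftrightarrow> \<not> f dvd h" if "prime f" for f
    using that assms by (simp add: multiplicity_eq_zero_iff)
  ultimately have "(\<forall>f. prime f \<and> f dvd g \<longrightarrow> multiplicity f g = multiplicity f (g * h))
      \<longleftrightarrow> (\<forall>f. prime f \<and> f dvd g \<longrightarrow> \<not> f dvd h)"
    by auto
  also have "\<dots> \<longleftrightarrow> coprime g h"
    using assms(1) by (simp add: coprime_iff_no_common_prime)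
  finally show ?thesis ..
qed

text \<open>By \<open>inner_word_of_poly\<close> and \<open>xpm1_dvd_if_coeff_0_shifts\<close>, the word of \<open>A g\<close> is orthogonal to
  all multiples of \<open>g\<close> iff \<open>x\<^sup>n - 1\<close> divides \<open>g (A g)(x\<^sup>-\<^sup>1)\<close>; so \<open>lcd_cyclic n g\<close> says that the
  cyclic code generated by \<open>g\<close> over the field is LCD.\<close>

definition lcd_cyclic :: "nat \<Rightarrow> 'a::field poly \<Rightarrow> bool" where
  "lcd_cyclic n g \<longleftrightarrow> (\<forall>A. xpm1 n dvd g * inv_var n (A * g) \<longrightarrow> xpm1 n dvd A * g)"

lemma xpm1_dvd_mult_inv_var_mod_iff:
  "xpm1 n dvd g * inv_var n ((A mod xpm1 n) * g) \<longleftrightarrow> xpm1 n dvd g * inv_var n (A * (g :: 'a::field poly))"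
proof -
  have "inv_var n ((A mod xpm1 n) * g) mod xpm1 n = inv_var n (A * g) mod xpm1 n"
    by (rule inv_var_mod_xpm1_eq) (simp add: mod_mult_left_eq)
  then have "(g * inv_var n ((A mod xpm1 n) * g)) mod xpm1 n = (g * inv_var n (A * g)) mod xpm1 n"
    by (metis mod_mult_right_eq)
  then show ?thesis
    by (simp add: dvd_eq_mod_eq_0)
qed

lemma lcd_cyclic_iff_coprime_reflect_poly:
  fixes g :: "'a::field_gcd poly"
  assumes n: "n \<ge> 1" and "g \<noteq> 0" and g_dvd: "g dvd xpm1 n"
  shows "lcd_cyclic n g \<longleftrightarrow> coprime (xpm1 n div g) (reflect_poly g)"
proof -
  define N :: "'a poly" where "N = xpm1 n"
  define h where "h = N div g"
  have N: "N = g * h"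
    using g_dvd by (simp add: N_def h_def)
  have orth_iff: "N dvd g * inv_var n (A * g) \<longleftrightarrow> h dvd reflect_poly g * A" for A
  proof -
    have "N dvd g * inv_var n (A * g) \<longleftrightarrow> N dvd inv_var n g * inv_var n (inv_var n (A * g))"
      using xpm1_dvd_inv_var_iff[OF n, of "g * inv_var n (A * g)"] by (simp add: N_def inv_var_mult)
    also have "\<dots> \<longleftrightarrow> N dvd inv_var n g * (A * g)"
    proof -
      have "N dvd inv_var n g * (inv_var n (inv_var n (A * g)) - A * g)"
        using xpm1_dvd_inv_var_inv_var[OF n, of "A * g"] by (simp add: N_def)
      then show ?thesis
        by (metis mod_eq_dvd_iff dvd_eq_mod_eq_0 right_diff_distrib)
    qed
    also have "\<dots> \<longleftrightarrow> N dvd monom 1 (degree g) * inv_var n g * (A * g)"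
      by (simp add: N_def mult.assoc xpm1_dvd_monom_mult_iff[OF n])
    also have "\<dots> \<longleftrightarrow> N dvd reflect_poly g * (A * g)"
    proof -
      have "N dvd (monom 1 (degree g) * inv_var n g - reflect_poly g) * (A * g)"
        using xpm1_dvd_monom_mult_inv_var_diff_reflect_poly[OF n, of g] by (simp add: N_def)
      then show ?thesis
        by (metis mod_eq_dvd_iff dvd_eq_mod_eq_0 left_diff_distrib)
    qed
    also have "\<dots> \<longleftrightarrow> h dvd reflect_poly g * A"
      using \<open>g \<noteq> 0\<close> by (simp add: N algebra_simps)
    finally show ?thesis .
  qed
  have code_iff: "N dvd A * g \<longleftrightarrow> h dvd A" for A
    using \<open>g \<noteq> 0\<close> by (simp add: N mult.commute)
  have "lcd_cyclic n g \<longleftrightarrow> (\<forall>A. h dvd reflect_poly g * A \<longrightarrow> h dvd A)"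
    unfolding lcd_cyclic_def N_def[symmetric] by (simp add: orth_iff code_iff)
  also have "\<dots> \<longleftrightarrow> coprime h (reflect_poly g)"
    using xpm1_neq_0[OF n] N by (intro dvd_cancel_iff_coprime) (auto simp: N_def)
  finally show ?thesis
    by (simp add: h_def N_def)
qed

lemma coeff_0_neq_0_if_dvd_xpm1:
  assumes "n \<ge> 1" "g dvd xpm1 n"
  shows "coeff (g :: 'a::field poly) 0 \<noteq> 0"
proof
  assume "coeff g 0 = 0"
  moreover obtain k where "xpm1 n = g * k"
    using assms(2) by (elim dvdE)
  ultimately have "coeff (xpm1 n :: 'a poly) 0 = 0"
    by (simp add: coeff_mult_0)
  with assms(1) show False
    by (simp add: xpm1_def coeff_monom)
qed

lemma reflect_poly_dvd_xpm1:
  assumes "n \<ge> 1" "g dvd xpm1 n"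
  shows "reflect_poly g dvd (xpm1 n :: 'a::field poly)"
proof -
  obtain k where "xpm1 n = g * k"
    using assms(2) by (elim dvdE)
  then have "reflect_poly g * reflect_poly k = - xpm1 n"
    by (metis reflect_poly_mult reflect_poly_xpm1[OF assms(1)])
  then show ?thesis
    by (metis dvd_minus_iff dvd_triv_left)
qed

lemma self_reciprocal_if_reflect_poly_dvd:
  assumes "reflect_poly g dvd g" "coeff g 0 \<noteq> 0"
  shows "self_reciprocal (g :: 'a::field poly)"
proof -
  obtain k where k: "g = reflect_poly g * k"
    using assms(1) by (elim dvdE)
  have "g \<noteq> 0"
    using assms(2) by auto
  moreover have "degree (reflect_poly g) = degree g"
    using assms(2) by simp
  ultimately have "degree k = 0"
    using k by (metis add_cancel_right_right degree_mult_eq mult_zero_left mult_zero_right)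
  then obtain c where "k = [:c:]"
    by (metis degree_eq_zeroE)
  with k \<open>g \<noteq> 0\<close> have "c \<noteq> 0" "g = smult c (reflect_poly g)"
    by auto
  then have "reflect_poly g = smult (inverse c) g"
    by (metis smult_smult left_inverse smult_1_left)
  with \<open>c \<noteq> 0\<close> show ?thesis
    unfolding self_reciprocal_def by (intro exI[of _ "inverse c"]) simp
qed

lemma coprime_smult_right_iff:
  "c \<noteq> 0 \<Longrightarrow> coprime h (smult c g) \<longleftrightarrow> coprime h (g :: 'a::field_gcd poly)"
proof -
  assume "c \<noteq> 0"
  then have "coprime h [:c:]"
    by (intro is_unit_right_imp_coprime) (simp add: is_unit_const_poly_iff dvd_field_iff)
  moreover have "smult c g = [:c:] * g"
    by simp
  ultimately show ?thesis
    by (simp only: coprime_mult_right_iff) simp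
qed

text \<open>The reflection of \<open>g\<close> divides \<open>x\<^sup>n - 1 = g h\<close> and has the degree of \<open>g\<close>; if it is coprime to \<open>h\<close>,
  it must therefore be an associate of \<open>g\<close>.\<close>

lemma coprime_reflect_poly_iff_self_reciprocal:
  fixes g :: "'a::field_gcd poly"
  assumes n: "n \<ge> 1" and g_dvd: "g dvd xpm1 n"
  shows "coprime (xpm1 n div g) (reflect_poly g) \<longleftrightarrow> self_reciprocal g \<and> coprime g (xpm1 n div g)"
proof
  assume coprime: "coprime (xpm1 n div g) (reflect_poly g)"
  have "reflect_poly g dvd g * (xpm1 n div g)"
    using reflect_poly_dvd_xpm1[OF n g_dvd] g_dvd by simp
  with coprime have "reflect_poly g dvd g"
    by (simp add: coprime_commute coprime_dvd_mult_left_iff)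
  then have "self_reciprocal g"
    using coeff_0_neq_0_if_dvd_xpm1[OF n g_dvd] by (rule self_reciprocal_if_reflect_poly_dvd)
  then obtain c where "c \<noteq> 0" "reflect_poly g = smult c g"
    by (auto simp: self_reciprocal_def)
  with coprime have "coprime (xpm1 n div g) g"
    by (simp add: coprime_smult_right_iff)
  with \<open>self_reciprocal g\<close> show "self_reciprocal g \<and> coprime g (xpm1 n div g)"
    by (simp add: coprime_commute)
next
  assume "self_reciprocal g \<and> coprime g (xpm1 n div g)"
  then obtain c where "c \<noteq> 0" "reflect_poly g = smult c g" "coprime (xpm1 n div g) g"
    by (auto simp: self_reciprocal_def coprime_commute)
  then show "coprime (xpm1 n div g) (reflect_poly g)"
    by (simp add: coprime_smult_right_iff)
qed

lemma lcd_cyclic_iff: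
  fixes g :: "'a::field_gcd poly"
  assumes n: "n \<ge> 1" and monic: "lead_coeff g = 1" and g_dvd: "g dvd xpm1 n"
  shows "lcd_cyclic n g \<longleftrightarrow> self_reciprocal g \<and>
    (\<forall>f. lead_coeff f = 1 \<and> irreducible f \<and> f dvd g \<longrightarrow> multiplicity f g = multiplicity f (xpm1 n))"
proof -
  define h where "h = xpm1 n div g"
  have "g \<noteq> 0"
    using monic by auto
  have N: "xpm1 n = g * h"
    using g_dvd by (simp add: h_def)
  then have "h \<noteq> 0"
    using xpm1_neq_0[OF n] by auto
  have "lcd_cyclic n g \<longleftrightarrow> self_reciprocal g \<and> coprime g h"
    using \<open>g \<noteq> 0\<close> g_dvd
    by (simp add: lcd_cyclic_iff_coprime_reflect_poly[OF n] coprime_reflect_poly_iff_self_reciprocal[OF n]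
        h_def)
  also have "coprime g h \<longleftrightarrow> (\<forall>f. prime f \<and> f dvd g \<longrightarrow> multiplicity f g = multiplicity f (g * h))"
    using \<open>g \<noteq> 0\<close> \<open>h \<noteq> 0\<close> by (rule coprime_iff_multiplicity_eq)
  finally show ?thesis
    by (simp add: N prime_poly_iff_monic_irreducible conj_ac)
qed

section \<open>Splitting \<open>R\<^sub>e\<^sub>,\<^sub>q\<close> by its idempotents\<close>

lemma is_LCD_cyclic_code_gen_iff:
  "is_LCD e n (cyclic_code_gen e n G) \<longleftrightarrow>
    (\<forall>x \<in> cyclic_code_gen e n G \<inter> eucl_dual e n (cyclic_code_gen e n G). x = (\<lambda>_. 0))"
proof -
  have "(\<lambda>_. 0) \<in> words e n"
    by (simp add: words_def in_R_def)
  moreover have "(\<lambda>_. 0) = cyc_mult e n (\<lambda>_. 0) G"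
    unfolding cyc_mult_def by (rule ext) (simp cong: if_cong)
  ultimately have "(\<lambda>_. 0) \<in> cyclic_code_gen e n G \<inter> eucl_dual e n (cyclic_code_gen e n G)"
    unfolding cyclic_code_gen_def eucl_dual_def eucl_inner_def by auto
  then show ?thesis
    unfolding is_LCD_def by blast
qed

lemma cyc_mult_in_words: "cyc_mult e n a b \<in> words e n"
  by (simp add: cyc_mult_def words_def in_R_def)

text \<open>\<open>component (\<alpha> i) w\<close> is the \<open>i\<close>-th coordinate of \<open>w\<close> under \<open>R\<^sub>e\<^sub>,\<^sub>q \<cong> \<bbbF>\<^sub>q\<^sup>e\<close>.\<close>

definition component :: "'a::field \<Rightarrow> (nat \<Rightarrow> 'a poly) \<Rightarrow> nat \<Rightarrow> 'a" where
  "component x w = (\<lambda>k. poly (w k) x)"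

definition idempotent_generator ::
    "nat \<Rightarrow> (nat \<Rightarrow> 'a::field) \<Rightarrow> (nat \<Rightarrow> 'a poly) \<Rightarrow> (nat \<Rightarrow> 'a poly) \<Rightarrow> 'a poly poly" where
  "idempotent_generator e \<alpha> h g = (\<Sum>i\<in>{1..e}. [:mu e \<alpha> h i:] * map_poly (\<lambda>c. [:c:]) (g i))"

context
  fixes e n :: nat and \<alpha> :: "nat \<Rightarrow> 'a::field" and z h :: "nat \<Rightarrow> 'a poly"
  assumes e: "e \<ge> 1" and n: "n \<ge> 1"
    and xpm1_e_split: "xpm1 e = (\<Prod>i\<in>{1..e}. [:- \<alpha> i, 1:])"
    and bezout: "\<forall>i\<in>{1..e}. z i * [:- \<alpha> i, 1:] + h i * (xpm1 e div [:- \<alpha> i, 1:]) = 1"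
begin

lemma poly_mod_xpm1_root:
  assumes i: "i \<in> {1..e}"
  shows "poly (r mod xpm1 e) (\<alpha> i) = poly r (\<alpha> i)"
proof -
  have "poly (xpm1 e) (\<alpha> i) = 0"
    unfolding xpm1_e_split poly_prod using i by (intro prod_zero) auto
  then show ?thesis
    by (metis mult_div_mod_eq poly_add poly_mult mult_zero_left add_0_left)
qed

lemma poly_cofactor_root:
  assumes i: "i \<in> {1..e}" and j: "j \<in> {1..e}"
  shows "poly (h i * (xpm1 e div [:- \<alpha> i, 1:])) (\<alpha> j) = (if i = j then 1 else 0)"
proof (cases "i = j")
  case True
  have "poly (z i * [:- \<alpha> i, 1:] + h i * (xpm1 e div [:- \<alpha> i, 1:])) (\<alpha> i) = 1"
    using bezout i by simp
  with True show ?thesis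
    by simp
next
  case False
  have "xpm1 e = [:- \<alpha> i, 1:] * (\<Prod>l\<in>{1..e}-{i}. [:- \<alpha> l, 1:])"
    unfolding xpm1_e_split using i by (rule prod.remove[OF finite_atLeastAtMost])
  then have "xpm1 e div [:- \<alpha> i, 1:] = (\<Prod>l\<in>{1..e}-{i}. [:- \<alpha> l, 1:])"
    by (metis nonzero_mult_div_cancel_left pCons_eq_0_iff one_neq_zero)
  with False i j show ?thesis
    by (auto simp: poly_prod intro!: bexI[of _ j])
qed

lemma poly_mu_root:
  assumes "i \<in> {1..e}" "j \<in> {1..e}"
  shows "poly (mu e \<alpha> h i) (\<alpha> j) = (if i = j then 1 else 0)"
  unfolding mu_def poly_mod_xpm1_root[OF assms(2)] using assms by (rule poly_cofactor_root)

lemma inj_on_roots: "inj_on \<alpha> {1..e}"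
  using poly_mu_root by (intro inj_onI) (metis zero_neq_one)

lemma eq_0_if_poly_roots_eq_0:
  assumes "in_R e r" and roots: "\<forall>i\<in>{1..e}. poly r (\<alpha> i) = 0"
  shows "r = 0"
proof (rule ccontr)
  assume "r \<noteq> 0"
  have "r mod xpm1 e = r"
    using assms(1) by (simp add: in_R_def)
  with \<open>r \<noteq> 0\<close> have "degree r < e"
    using degree_mod_less'[OF xpm1_neq_0[OF e], of r] degree_xpm1[OF e, where 'a='a] by simp
  have "e = card (\<alpha> ` {1..e})"
    using card_image[OF inj_on_roots] by simp
  also have "\<dots> \<le> card {x. poly r x = 0}"
    using roots \<open>r \<noteq> 0\<close> by (intro card_mono poly_roots_finite) auto
  also have "\<dots> \<le> degree r"
    by (rule card_poly_roots_bound[OF \<open>r \<noteq> 0\<close>])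
  finally show False
    using \<open>degree r < e\<close> by simp
qed

lemma word_eq_0_if_components_eq_0:
  assumes "w \<in> words e n" "\<forall>i\<in>{1..e}. component (\<alpha> i) w = (\<lambda>_. 0)"
  shows "w = (\<lambda>_. 0)"
proof
  fix k
  show "w k = 0"
  proof (cases "k < n")
    case True
    with assms show ?thesis
      by (intro eq_0_if_poly_roots_eq_0) (auto simp: words_def component_def fun_eq_iff)
  next
    case False
    with assms(1) show ?thesis
      by (simp add: words_def)
  qed
qed

lemma exists_word_with_single_component:
  assumes i: "i \<in> {1..e}"
  obtains a where "a \<in> words e n" "poly_of_word n (component (\<alpha> i) a) = A mod xpm1 n"
    "\<forall>j\<in>{1..e}. j \<noteq> i \<longrightarrow> component (\<alpha> j) a = (\<lambda>_. 0)"
proof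
  define a where "a = (\<lambda>k. if k < n then smult (word_of_poly n A k) (mu e \<alpha> h i) mod xpm1 e else 0)"
  show "a \<in> words e n"
    by (simp add: a_def words_def in_R_def)
  have "component (\<alpha> j) a = (\<lambda>k. if i = j then word_of_poly n A k else 0)" if j: "j \<in> {1..e}" for j
  proof
    fix k
    show "component (\<alpha> j) a k = (if i = j then word_of_poly n A k else 0)"
    proof (cases "k < n")
      case True
      then show ?thesis
        by (simp add: a_def component_def poly_mod_xpm1_root[OF j] poly_mu_root[OF i j])
    next
      case False
      then show ?thesis
        using coeff_mod_xpm1_eq_0[OF n, of k A] by (simp add: a_def component_def word_of_poly_def)
    qed
  qed
  then show "poly_of_word n (component (\<alpha> i) a) = A mod xpm1 n"
    "\<forall>j\<in>{1..e}. j \<noteq> i \<longrightarrow> component (\<alpha> j) a = (\<lambda>_. 0)"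
    using i by (auto simp: poly_of_word_of_poly[OF n])
qed

lemma component_cyc_mult:
  "i \<in> {1..e} \<Longrightarrow> component (\<alpha> i) (cyc_mult e n a b) = cyc_conv n (component (\<alpha> i) a) (component (\<alpha> i) b)"
  by (auto simp: component_def cyc_mult_def cyc_conv_def poly_mod_xpm1_root poly_sum fun_eq_iff
      intro!: sum.cong)

lemma poly_eucl_inner_root:
  "i \<in> {1..e} \<Longrightarrow>
    poly (eucl_inner e n c v) (\<alpha> i) = (\<Sum>k<n. component (\<alpha> i) c k * component (\<alpha> i) v k)"
  by (simp add: component_def eucl_inner_def poly_mod_xpm1_root poly_sum)

lemma poly_coeff_idempotent_generator:
  assumes i: "i \<in> {1..e}"
  shows "poly (coeff (idempotent_generator e \<alpha> h g) j) (\<alpha> i) = coeff (g i) j"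
proof -
  have "poly (coeff (idempotent_generator e \<alpha> h g) j) (\<alpha> i)
      = (\<Sum>l\<in>{1..e}. poly (mu e \<alpha> h l) (\<alpha> i) * coeff (g l) j)"
    by (simp add: idempotent_generator_def coeff_sum poly_sum coeff_map_poly mult.commute)
  also have "\<dots> = coeff (g i) j"
    using i by (simp add: poly_mu_root if_distrib[where f = "\<lambda>x. x * _"] cong: if_cong)
  finally show ?thesis .
qed

lemma component_idempotent_generator:
  assumes i: "i \<in> {1..e}"
  shows "component (\<alpha> i) (to_word e n (idempotent_generator e \<alpha> h g)) = word_of_poly n (g i)"
proof
  fix k
  define D where "D = degree (idempotent_generator e \<alpha> h g)"
  have "degree (g i) \<le> D"
  proof (cases "g i = 0")
    case False
    then have "coeff (idempotent_generator e \<alpha> h g) (degree (g i)) \<noteq> 0"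
      using poly_coeff_idempotent_generator[OF i, of g "degree (g i)"] by (metis leading_coeff_0_iff poly_0)
    then show ?thesis
      unfolding D_def by (rule le_degree)
  qed simp
  then have g_mod: "g i mod xpm1 n = (\<Sum>j\<le>D. monom (coeff (g i) j) (j mod n))"
    using sum_monom_mod_xpm1[OF n, of "\<lambda>j. coeff (g i) j" "\<lambda>j. j" "{..D}"]
    by (simp add: poly_as_sum_of_monoms')
  show "component (\<alpha> i) (to_word e n (idempotent_generator e \<alpha> h g)) k = word_of_poly n (g i) k"
  proof (cases "k < n")
    case True
    then have "component (\<alpha> i) (to_word e n (idempotent_generator e \<alpha> h g)) k
        = (\<Sum>j\<le>D. if j mod n = k then coeff (g i) j else 0)"
      by (simp add: component_def to_word_def poly_mod_xpm1_root[OF i] poly_sum D_def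
          if_distrib[of "\<lambda>p. poly p _"])
        (intro sum.cong refl, simp add: poly_coeff_idempotent_generator[OF i])
    also have "\<dots> = word_of_poly n (g i) k"
      by (simp add: word_of_poly_def g_mod coeff_sum)
    finally show ?thesis .
  next
    case False
    then show ?thesis
      using coeff_mod_xpm1_eq_0[OF n, of k "g i"] by (simp add: component_def to_word_def word_of_poly_def)
  qed
qed

lemma component_code:
  assumes "i \<in> {1..e}"
  shows "component (\<alpha> i) (cyc_mult e n a (to_word e n (idempotent_generator e \<alpha> h g)))
       = word_of_poly n (poly_of_word n (component (\<alpha> i) a) * g i)"
proof -
  have "component (\<alpha> i) (cyc_mult e n a (to_word e n (idempotent_generator e \<alpha> h g)))
      = word_of_poly n (poly_of_word n (component (\<alpha> i) a) * (g i mod xpm1 n))"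
    using assms by (simp add: component_cyc_mult component_idempotent_generator
        cyc_conv_eq_word_of_poly_mult[OF n] poly_of_word_of_poly[OF n])
  then show ?thesis
    by (simp add: word_of_poly_def mod_mult_right_eq)
qed

lemma poly_eucl_inner_code:
  assumes "i \<in> {1..e}"
  shows "poly (eucl_inner e n (cyc_mult e n b (to_word e n (idempotent_generator e \<alpha> h g)))
                              (cyc_mult e n a (to_word e n (idempotent_generator e \<alpha> h g)))) (\<alpha> i)
       = coeff ((poly_of_word n (component (\<alpha> i) b) * g i *
           inv_var n (poly_of_word n (component (\<alpha> i) a) * g i)) mod xpm1 n) 0"
  using assms by (simp add: poly_eucl_inner_root component_code inner_word_of_poly[OF n])

lemma eucl_inner_code_eq_0_iff:
  "eucl_inner e n (cyc_mult e n b (to_word e n (idempotent_generator e \<alpha> h g)))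
                        (cyc_mult e n a (to_word e n (idempotent_generator e \<alpha> h g))) = 0
    \<longleftrightarrow> (\<forall>i\<in>{1..e}. coeff ((poly_of_word n (component (\<alpha> i) b) * g i *
           inv_var n (poly_of_word n (component (\<alpha> i) a) * g i)) mod xpm1 n) 0 = 0)"
  (is "?inner = 0 \<longleftrightarrow> _")
proof -
  have "?inner = 0 \<longleftrightarrow> (\<forall>i\<in>{1..e}. poly ?inner (\<alpha> i) = 0)"
    using eq_0_if_poly_roots_eq_0[of ?inner] by (auto simp: in_R_def eucl_inner_def)
  then show ?thesis
    by (simp add: poly_eucl_inner_code)
qed

lemma lcd_cyclic_if_is_LCD:
  assumes lcd: "is_LCD e n (cyclic_code_gen e n (to_word e n (idempotent_generator e \<alpha> h g)))"
    and i: "i \<in> {1..e}"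
  shows "lcd_cyclic n (g i)"
  unfolding lcd_cyclic_def
proof (intro allI impI)
  define G where "G = to_word e n (idempotent_generator e \<alpha> h g)"
  define C where "C = cyclic_code_gen e n G"
  fix A assume orth: "xpm1 n dvd g i * inv_var n (A * g i)"
  obtain a where a: "a \<in> words e n" "poly_of_word n (component (\<alpha> i) a) = A mod xpm1 n"
    "\<forall>j\<in>{1..e}. j \<noteq> i \<longrightarrow> component (\<alpha> j) a = (\<lambda>_. 0)"
    using exists_word_with_single_component[OF i] .
  define x where "x = cyc_mult e n a G"
  have "eucl_inner e n (cyc_mult e n b G) x = 0" for b
    unfolding x_def G_def eucl_inner_code_eq_0_iff
  proof
    fix j assume j: "j \<in> {1..e}"
    show "coeff ((poly_of_word n (component (\<alpha> j) b) * g j *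
        inv_var n (poly_of_word n (component (\<alpha> j) a) * g j)) mod xpm1 n) 0 = 0"
    proof (cases "j = i")
      case True
      have "xpm1 n dvd g i * inv_var n ((A mod xpm1 n) * g i)"
        using orth by (simp add: xpm1_dvd_mult_inv_var_mod_iff)
      then have "xpm1 n dvd poly_of_word n (component (\<alpha> i) b) * (g i * inv_var n ((A mod xpm1 n) * g i))"
        by (rule dvd_mult)
      then show ?thesis
        using True a(2) by (simp add: dvd_eq_mod_eq_0 mult.assoc)
    next
      case False
      with a(3) j show ?thesis
        by (simp add: poly_of_word_def inv_var_def)
    qed
  qed
  then have "x \<in> C \<inter> eucl_dual e n C"
    using a(1) by (auto simp: x_def C_def cyclic_code_gen_def eucl_dual_def cyc_mult_in_words)
  then have "x = (\<lambda>_. 0)"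
    using lcd unfolding is_LCD_cyclic_code_gen_iff C_def G_def by blast
  then have "component (\<alpha> i) x = (\<lambda>_. 0)"
    by (simp add: component_def)
  then have "xpm1 n dvd (A mod xpm1 n) * g i"
    using component_code[OF i] a(2) by (simp add: x_def G_def word_of_poly_eq_0_iff)
  then show "xpm1 n dvd A * g i"
    by (simp add: dvd_eq_mod_eq_0 mod_mult_left_eq)
qed

lemma is_LCD_if_lcd_cyclic:
  assumes lcd: "\<forall>i\<in>{1..e}. lcd_cyclic n (g i)"
  shows "is_LCD e n (cyclic_code_gen e n (to_word e n (idempotent_generator e \<alpha> h g)))"
  unfolding is_LCD_cyclic_code_gen_iff
proof
  define G where "G = to_word e n (idempotent_generator e \<alpha> h g)"
  define C where "C = cyclic_code_gen e n G"
  fix x assume "x \<in> cyclic_code_gen e n (to_word e n (idempotent_generator e \<alpha> h g))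
    \<inter> eucl_dual e n (cyclic_code_gen e n (to_word e n (idempotent_generator e \<alpha> h g)))"
  then obtain a where x: "x = cyc_mult e n a G" "x \<in> words e n"
    and orth: "\<forall>c\<in>C. eucl_inner e n c x = 0"
    by (auto simp: C_def G_def cyclic_code_gen_def eucl_dual_def)
  show "x = (\<lambda>_. 0)"
  proof (rule word_eq_0_if_components_eq_0[OF x(2)], intro ballI)
    fix i assume i: "i \<in> {1..e}"
    define A where "A = poly_of_word n (component (\<alpha> i) a)"
    have "xpm1 n dvd g i * inv_var n (A * g i)"
    proof (rule xpm1_dvd_if_coeff_0_shifts[OF n])
      fix s
      obtain b where b: "b \<in> words e n" "poly_of_word n (component (\<alpha> i) b) = monom 1 s mod xpm1 n"
        using exists_word_with_single_component[OF i] by metis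
      then have "eucl_inner e n (cyc_mult e n b G) x = 0"
        using orth by (auto simp: C_def cyclic_code_gen_def)
      then have "coeff ((poly_of_word n (component (\<alpha> i) b) * g i * inv_var n (A * g i)) mod xpm1 n) 0 = 0"
        using i unfolding x(1) G_def eucl_inner_code_eq_0_iff A_def by blast
      then have "coeff ((monom 1 s mod xpm1 n * g i * inv_var n (A * g i)) mod xpm1 n) 0 = 0"
        by (simp only: b(2))
      then show "coeff ((monom 1 s * (g i * inv_var n (A * g i))) mod xpm1 n) 0 = 0"
        by (simp add: mult.assoc mod_mult_left_eq)
    qed
    then have "xpm1 n dvd A * g i"
      using lcd i by (simp add: lcd_cyclic_def)
    then show "component (\<alpha> i) x = (\<lambda>_. 0)"
      using component_code[OF i] by (simp add: x(1) G_def A_def word_of_poly_eq_0_iff)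
  qed
qed

lemma is_LCD_iff_lcd_cyclic:
  "is_LCD e n (cyclic_code_gen e n (to_word e n (idempotent_generator e \<alpha> h g)))
    \<longleftrightarrow> (\<forall>i\<in>{1..e}. lcd_cyclic n (g i))"
  using lcd_cyclic_if_is_LCD is_LCD_if_lcd_cyclic by blast

end

theorem corollary4p4:
  fixes p m e t n q :: nat
    and \<alpha> :: "nat \<Rightarrow> 'a::{finite,field_gcd}"
    and z h g :: "nat \<Rightarrow> 'a poly"
  assumes "prime p" and "odd p" and "card (UNIV :: 'a set) = q" and "q = p ^ m"
    and "q = e * t + 1" and "e \<ge> 2" and "t \<ge> 1"
    and "xpm1 e = (\<Prod>i\<in>{1..e}. [:- \<alpha> i, 1:])"
    and "\<forall>i\<in>{1..e}. z i * [:- \<alpha> i, 1:] + h i * (xpm1 e div [:- \<alpha> i, 1:]) = 1"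
    and "n \<ge> 1" and "gcd n q \<noteq> 1"
    and "\<forall>i\<in>{1..e}. lead_coeff (g i) = 1 \<and> g i dvd xpm1 n"
  shows "is_LCD e n (cyclic_code_gen e n
            (to_word e n (\<Sum>i\<in>{1..e}. [:mu e \<alpha> h i:] * map_poly (\<lambda>c. [:c:]) (g i))))
         \<longleftrightarrow> (\<forall>i\<in>{1..e}. self_reciprocal (g i) \<and>
               (\<forall>f. lead_coeff f = 1 \<and> irreducible f \<and> f dvd g i \<longrightarrow>
                    multiplicity f (g i) = multiplicity f (xpm1 n :: 'a poly)))"
proof -
  have e: "e \<ge> 1"
    using \<open>e \<ge> 2\<close> by simp
  have "is_LCD e n (cyclic_code_gen e n (to_word e n (idempotent_generator e \<alpha> h g)))
      \<longleftrightarrow> (\<forall>i\<in>{1..e}. lcd_cyclic n (g i))"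
    using e \<open>n \<ge> 1\<close> assms(8,9) by (rule is_LCD_iff_lcd_cyclic)
  also have "\<dots> \<longleftrightarrow> (\<forall>i\<in>{1..e}. self_reciprocal (g i) \<and>
      (\<forall>f. lead_coeff f = 1 \<and> irreducible f \<and> f dvd g i \<longrightarrow> multiplicity f (g i) = multiplicity f (xpm1 n)))"
    using lcd_cyclic_iff[OF \<open>n \<ge> 1\<close>] assms(12) by auto
  finally show ?thesis
    by (simp add: idempotent_generator_def)
qed

end
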